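(* Let $\vec G=(G,\alpha,w)$ be a finite magnetic graph with underlying graph $G=(V,E,\partial)$, let $V_1\subseteq V_0\subseteq V$, and let $A$ be an $s$-partition of $r\in\mathbb{N}$. Then the spectrum of the normalised magnetic Laplacian of the $V_1$-contracted $A$-union $\vec F_{A,V_1}=\vec F_{A,V_1}(\vec G,V_0)$ is $$\operatorname{spec}(\vec F_{A,V_1})=\operatorname{spec}(\vec G)\uplus\operatorname{spec}(\vec G^+_{V_0})^{(r-s)}\uplus\operatorname{spec}(\vec G^+_{V_1})^{(s-1)}.$$
   Context: A graph $G=(V,E,\partial)$: finite disjoint sets $V,E$, incidence $\partial e=(\partial_-e,\partial_+e)$, inversion $e\mapsto\bar e$ ($\bar{\bar e}=e$, $\bar e\ne e$, $\partial_\pm\bar e=\partial_\mp e$); loops/multiple edges allowed; $E_v=\{e:\partial_-e=v\}$, $\deg v=|E_v|>0$. A magnetic graph $\vec G=(G,\alpha,w)$ has $w:E\to(0,\infty)$, $w_{\bar e}=w_e$, and $\alpha:E\to\mathbb{R}/2\pi\mathbb{Z}$, $\alpha_{\bar e}=-\alpha_e$; $\deg^wv=\sum_{e\in E_v}w_e$. The (normalised) magnetic Laplacian on $\ell^2(V,\deg^w)$ is $(\Delta f)(v)=f(v)-\frac1{\deg^wv}\sum_{e\in E_v}w_ee^{i\alpha_e}f(\partial_+e)$; $\operatorname{spec}(\vec G)$ is its eigenvalue multiset. For $W\subseteq V$, $\operatorname{spec}(\vec G^+_W)$ is the eigenvalue multiset of the Dirichlet Laplacian $\iota_W^*\Delta\iota_W$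 with $\iota_W:\ell^2(V\setminus W,\deg^w)\to\ell^2(V,\deg^w)$ extension by zero. Contraction of vertices along an equivalence relation keeps all edges (with their weights and potentials) and replaces vertices by classes, incidence $e\mapsto([\partial_-e],[\partial_+e])$. Frame member: $G^a$ is the disjoint union of $a$ copies $G\times\{j\}$; with $(v,i)\sim(v',j)$ iff $(v,i)=(v',j)$ or ($v=v'\in V_0$), $F_a(\vec G,V_0)=G^a/\!\sim$ with $w_{(e,j)}=w_e$, $\alpha_{(e,j)}=\alpha_e$. An $s$-partition of $r$ is a multiset $A=\{\!\{a_1,\dots,a_s\}\!\}$ of natural numbers with sum $r$. $\vec F_A=\bigsqcup_{i=1}^sF_{a_i}(\vec G,V_0)\times\{i\}$, and $\vec F_{A,V_1}$ is obtained from $\vec F_A$ by contracting, for each $v_1\in V_1$, the $s$ vertices $([v_1],i)$, $i=1,\dots,s$, into one vertex. Multisets: $\uplus$ adds multiplicities; $M^{(k)}$ multiplies multiplicities by $k$ ($M^{(0)}$ empty). *)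

theory Defs
  imports Complex_Main "HOL-Computational_Algebra.Polynomial" "HOL-Library.Multiset"
    "HOL-Combinatorics.Permutations"
begin

text \<open>A (magnetic) graph: vertex set, edge set, incidence (tail, head), inversion,
  weight w and magnetic potential alpha (a real representative of an element of R/2piZ;
  only exp(i alpha) enters the Laplacian).\<close>

record ('v, 'e) mgraph =
  mg_V :: "'v set"
  mg_E :: "'e set"
  mg_src :: "'e \<Rightarrow> 'v"
  mg_tgt :: "'e \<Rightarrow> 'v"
  mg_inv :: "'e \<Rightarrow> 'e"
  mg_w :: "'e \<Rightarrow> real"
  mg_alpha :: "'e \<Rightarrow> real"

definition magnetic_graph :: "('v, 'e) mgraph \<Rightarrow> bool" where
  "magnetic_graph G \<longleftrightarrow>
     finite (mg_V G) \<and> finite (mg_E G) \<and>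
     (\<forall>e\<in>mg_E G.
        mg_src G e \<in> mg_V G \<and> mg_tgt G e \<in> mg_V G \<and>
        mg_inv G e \<in> mg_E G \<and> mg_inv G (mg_inv G e) = e \<and> mg_inv G e \<noteq> e \<and>
        mg_src G (mg_inv G e) = mg_tgt G e \<and> mg_tgt G (mg_inv G e) = mg_src G e \<and>
        mg_w G e > 0 \<and> mg_w G (mg_inv G e) = mg_w G e \<and>
        (\<exists>k::int. mg_alpha G (mg_inv G e) = - mg_alpha G e + 2 * pi * of_int k)) \<and>
     (\<forall>v\<in>mg_V G. \<exists>e\<in>mg_E G. mg_src G e = v)"

definition out_edges :: "('v, 'e) mgraph \<Rightarrow> 'v \<Rightarrow> 'e set" where
  "out_edges G v = {e \<in> mg_E G. mg_src G e = v}"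

definition wdeg :: "('v, 'e) mgraph \<Rightarrow> 'v \<Rightarrow> real" where
  "wdeg G v = (\<Sum>e\<in>out_edges G v. mg_w G e)"

text \<open>Matrix of the normalised magnetic Laplacian in the standard basis (delta functions):
  (Delta f)(v) = f(v) - 1/deg^w v * sum_{e in E_v} w_e e^{i alpha_e} f(tgt e).\<close>

definition lap :: "('v, 'e) mgraph \<Rightarrow> 'v \<Rightarrow> 'v \<Rightarrow> complex" where
  "lap G v u = (if v = u then 1 else 0)
     - (\<Sum>e\<in>{e\<in>out_edges G v. mg_tgt G e = u}.
          complex_of_real (mg_w G e) * exp (\<i> * complex_of_real (mg_alpha G e)))
       / complex_of_real (wdeg G v)"

definition charpoly_on :: "'v set \<Rightarrow> ('v \<Rightarrow> 'v \<Rightarrow> complex) \<Rightarrow> complex poly" where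
  "charpoly_on S M = (\<Sum>p\<in>{p. p permutes S}. of_int (sign p) *
      (\<Prod>v\<in>S. if p v = v then [:- M v v, 1:] else [:- M v (p v):]))"

definition spec :: "('v, 'e) mgraph \<Rightarrow> complex multiset" where
  "spec G = proots (charpoly_on (mg_V G) (lap G))"

text \<open>Dirichlet Laplacian iota_W^* Delta iota_W on l^2(V - W, deg^w): since the weighted inner
  product is diagonal, iota_W^* is restriction to V - W, so its matrix is the
  (V - W) x (V - W) block of the Laplacian matrix.\<close>
definition dirichlet_spec :: "('v, 'e) mgraph \<Rightarrow> 'v set \<Rightarrow> complex multiset" where
  "dirichlet_spec G W = proots (charpoly_on (mg_V G - W) (lap G))"

definition contract :: "('v, 'e) mgraph \<Rightarrow> 'v rel \<Rightarrow> ('v set, 'e) mgraph" where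
  "contract G R = \<lparr> mg_V = mg_V G // R, mg_E = mg_E G,
      mg_src = (\<lambda>e. R `` {mg_src G e}), mg_tgt = (\<lambda>e. R `` {mg_tgt G e}),
      mg_inv = mg_inv G, mg_w = mg_w G, mg_alpha = mg_alpha G \<rparr>"

definition copies :: "('v, 'e) mgraph \<Rightarrow> nat \<Rightarrow> ('v \<times> nat, 'e \<times> nat) mgraph" where
  "copies G a = \<lparr> mg_V = mg_V G \<times> {..<a}, mg_E = mg_E G \<times> {..<a},
      mg_src = (\<lambda>(e, j). (mg_src G e, j)), mg_tgt = (\<lambda>(e, j). (mg_tgt G e, j)),
      mg_inv = (\<lambda>(e, j). (mg_inv G e, j)), mg_w = (\<lambda>(e, j). mg_w G e),
      mg_alpha = (\<lambda>(e, j). mg_alpha G e) \<rparr>"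

definition frame_rel :: "('v, 'e) mgraph \<Rightarrow> 'v set \<Rightarrow> nat \<Rightarrow> (('v \<times> nat) \<times> ('v \<times> nat)) set" where
  "frame_rel G V0 a = {((v, i), (v', j)). (v, i) \<in> mg_V G \<times> {..<a} \<and> (v', j) \<in> mg_V G \<times> {..<a} \<and>
      ((v, i) = (v', j) \<or> (v = v' \<and> v \<in> V0))}"

definition frame :: "('v, 'e) mgraph \<Rightarrow> 'v set \<Rightarrow> nat \<Rightarrow> (('v \<times> nat) set, 'e \<times> nat) mgraph" where
  "frame G V0 a = contract (copies G a) (frame_rel G V0 a)"

text \<open>The vertex [v] of F_a(G, V0) (for v in V0 it does not depend on the copy).\<close>
definition frame_cls :: "('v, 'e) mgraph \<Rightarrow> 'v set \<Rightarrow> nat \<Rightarrow> 'v \<Rightarrow> ('v \<times> nat) set" where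
  "frame_cls G V0 a v = frame_rel G V0 a `` {(v, 0)}"

definition dunion :: "(nat \<Rightarrow> ('v, 'e) mgraph) \<Rightarrow> nat \<Rightarrow> ('v \<times> nat, 'e \<times> nat) mgraph" where
  "dunion H s = \<lparr> mg_V = {(x, i). i < s \<and> x \<in> mg_V (H i)},
      mg_E = {(e, i). i < s \<and> e \<in> mg_E (H i)},
      mg_src = (\<lambda>(e, i). (mg_src (H i) e, i)), mg_tgt = (\<lambda>(e, i). (mg_tgt (H i) e, i)),
      mg_inv = (\<lambda>(e, i). (mg_inv (H i) e, i)), mg_w = (\<lambda>(e, i). mg_w (H i) e),
      mg_alpha = (\<lambda>(e, i). mg_alpha (H i) e) \<rparr>"

definition A_union :: "('v, 'e) mgraph \<Rightarrow> 'v set \<Rightarrow> nat multiset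
     \<Rightarrow> ((('v \<times> nat) set) \<times> nat, ('e \<times> nat) \<times> nat) mgraph" where
  "A_union G V0 A = (let as = sorted_list_of_multiset A in
      dunion (\<lambda>i. frame G V0 (as ! i)) (length as))"

definition contr_rel :: "('v, 'e) mgraph \<Rightarrow> 'v set \<Rightarrow> nat multiset \<Rightarrow> 'v set
     \<Rightarrow> ((('v \<times> nat) set \<times> nat) \<times> (('v \<times> nat) set \<times> nat)) set" where
  "contr_rel G V0 A V1 = (let as = sorted_list_of_multiset A in
      {((x, i), (y, j)). (x, i) \<in> mg_V (A_union G V0 A) \<and> (y, j) \<in> mg_V (A_union G V0 A) \<and>
        ((x, i) = (y, j) \<or>
         (\<exists>v1\<in>V1. x = frame_cls G V0 (as ! i) v1 \<and> y = frame_cls G V0 (as ! j) v1))})"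

definition contracted_A_union :: "('v, 'e) mgraph \<Rightarrow> 'v set \<Rightarrow> nat multiset \<Rightarrow> 'v set
     \<Rightarrow> ((('v \<times> nat) set \<times> nat) set, ('e \<times> nat) \<times> nat) mgraph" where
  "contracted_A_union G V0 A V1 = contract (A_union G V0 A) (contr_rel G V0 A V1)"

end

theory Submission
  imports Defs "Jordan_Normal_Form.Char_Poly" "HOL-Library.Disjoint_Sets"
begin

(* The contracted A-union consists of r = sum_mset A copies ("sheets") of G, glued vertex-wise: over
   v the sheets fall into the blocks of a partition P v (one block if v is in V1, one block per frame
   member if v is in V0 - V1, singletons otherwise), and the vertices of the union are the pairs
   (v, B) with B in P v. Its Laplacian is the transition operator of G lifted to these pairs.

   Take r test vectors b_k on the sheets, each constant on the blocks over a region V_k and summing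
   to zero on every block over V - V_k. Then f |-> ((v, B) |-> f v * avg_B b_k) maps functions on V_k
   that vanish outside V_k into the union and intertwines the Dirichlet Laplacian on V_k with the
   Laplacian of the union. The constant vector (V_k = V), s - 1 vectors balancing the frame members
   (V_k = V - V1) and r - s vectors balancing the sheets of one member (V_k = V - V0) are linearly
   independent, and a count of blocks shows that the combined intertwiner is square. Its kernel is
   trivial, so the characteristic polynomial of the union is the product of the three Dirichlet
   characteristic polynomials with multiplicities 1, s - 1 and r - s. *)

section \<open>Determinants of matrices indexed by finite sets\<close>

definition det_on :: "'a set \<Rightarrow> ('a \<Rightarrow> 'a \<Rightarrow> 'b::comm_ring_1) \<Rightarrow> 'b" where
  "det_on S F = (\<Sum>p\<in>{p. p permutes S}. of_int (sign p) * (\<Prod>v\<in>S. F v (p v)))"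

lemma det_on_cong:
  assumes "\<And>u v. u \<in> S \<Longrightarrow> v \<in> S \<Longrightarrow> F u v = F' u v"
  shows "det_on S F = det_on S F'"
  unfolding det_on_def
  by (intro sum.cong refl arg_cong2[where f="(*)"] prod.cong)
     (use assms in \<open>auto simp: permutes_in_image\<close>)

lemma det_on_reindex:
  assumes bij: "bij_betw h S' S" and fin: "finite S'"
  shows "det_on S F = det_on S' (\<lambda>a b. F (h a) (h b))"
proof -
  let ?\<Phi> = "\<lambda>\<pi> x. if x \<in> S then h (\<pi> (inv_into S' h x)) else x"
  have inj: "inj_on h S'" and hS: "h ` S' = S"
    using bij by (auto simp: bij_betw_def)
  have "det_on S F = (\<Sum>p | p permutes S'. of_int (sign (?\<Phi> p)) * (\<Prod>v\<in>S. F v (?\<Phi> p v)))"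
    unfolding det_on_def by (rule sum.reindex_bij_betw[OF bij_betw_permutations[OF bij], symmetric])
  also have "\<dots> = det_on S' (\<lambda>a b. F (h a) (h b))"
    unfolding det_on_def
  proof (intro sum.cong refl)
    fix p assume p: "p \<in> {p. p permutes S'}"
    have "?\<Phi> p = map_permutation S' h p"
      unfolding map_permutation_def restrict_id_def hS by (auto simp: fun_eq_iff)
    hence "sign (?\<Phi> p) = sign p" using sign_map_permutation[OF inj _ fin] p by simp
    moreover have "(\<Prod>v\<in>S. F v (?\<Phi> p v)) = (\<Prod>a\<in>S'. F (h a) (h (p a)))"
      unfolding prod.reindex_bij_betw[OF bij, symmetric]
      using bij by (intro prod.cong refl) (auto simp: bij_betw_inv_into_left bij_betw_apply)
    ultimately show "of_int (sign (?\<Phi> p)) * (\<Prod>v\<in>S. F v (?\<Phi> p v)) =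
        of_int (sign p) * (\<Prod>a\<in>S'. F (h a) (h (p a)))" by simp
  qed
  finally show ?thesis .
qed

lemma det_on_eq_det_mat: "det_on {0..<n} F = det (mat n n (\<lambda>(i,j). F i j))"
proof -
  have "det (mat n n (\<lambda>(i,j). F i j)) = (\<Sum>p | p permutes {0..<n}.
     of_int (sign p) * (\<Prod>i = 0..<n. mat n n (\<lambda>(i,j). F i j) $$ (i, p i)))"
    by (rule det_def') simp
  also have "\<dots> = det_on {0..<n} F"
    unfolding det_on_def
    by (intro sum.cong refl arg_cong2[where f="(*)"] prod.cong) (auto simp: permutes_in_image)
  finally show ?thesis by simp
qed

lemma det_on_mult:
  assumes fin: "finite S"
  shows "det_on S (\<lambda>u w. \<Sum>v\<in>S. F u v * G v w) = det_on S F * det_on S G"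
proof -
  obtain e where e: "bij_betw e {0..<card S} S" using ex_bij_betw_nat_finite[OF fin] by blast
  let ?n = "card S"
  let ?A = "mat ?n ?n (\<lambda>(i,j). F (e i) (e j))"
  let ?B = "mat ?n ?n (\<lambda>(i,j). G (e i) (e j))"
  have "?A * ?B = mat ?n ?n (\<lambda>(i,j). \<Sum>v\<in>S. F (e i) v * G v (e j))"
  proof (rule eq_matI)
    fix i j assume "i < dim_row (mat ?n ?n (\<lambda>(i,j). \<Sum>v\<in>S. F (e i) v * G v (e j)))"
      and "j < dim_col (mat ?n ?n (\<lambda>(i,j). \<Sum>v\<in>S. F (e i) v * G v (e j)))"
    then show "(?A * ?B) $$ (i, j) = mat ?n ?n (\<lambda>(i,j). \<Sum>v\<in>S. F (e i) v * G v (e j)) $$ (i, j)"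
      by (simp add: scalar_prod_def sum.reindex_bij_betw[OF e, where g="\<lambda>v. F (e i) v * G v (e j)"])
  qed auto
  hence "det_on S (\<lambda>u w. \<Sum>v\<in>S. F u v * G v w) = det (?A * ?B)"
    by (simp add: det_on_reindex[OF e] det_on_eq_det_mat)
  also have "\<dots> = det ?A * det ?B" by (rule det_mult[of _ ?n]) auto
  also have "\<dots> = det_on S F * det_on S G"
    by (simp add: det_on_reindex[OF e] det_on_eq_det_mat)
  finally show ?thesis .
qed

lemma det_on_eq_0_imp_nontrivial_kernel:
  fixes F :: "'a \<Rightarrow> 'a \<Rightarrow> 'b::field"
  assumes fin: "finite S" and "det_on S F = 0"
  obtains l where "\<exists>v\<in>S. l v \<noteq> 0" and "\<And>u. u \<in> S \<Longrightarrow> (\<Sum>v\<in>S. F u v * l v) = 0"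
proof -
  obtain e where e: "bij_betw e {0..<card S} S" using ex_bij_betw_nat_finite[OF fin] by blast
  let ?n = "card S"
  let ?A = "mat ?n ?n (\<lambda>(i,j). F (e i) (e j))"
  have "det ?A = 0" using assms(2) by (simp add: det_on_reindex[OF e] det_on_eq_det_mat)
  then obtain x where x: "x \<in> carrier_vec ?n" "x \<noteq> 0\<^sub>v ?n" "?A *\<^sub>v x = 0\<^sub>v ?n"
    using det_0_iff_vec_prod_zero_field[of ?A ?n] by auto
  define l where "l = (\<lambda>v. x $ (inv_into {0..<?n} e v))"
  have l_e: "l (e i) = x $ i" if "i < ?n" for i
    using e that by (simp add: l_def bij_betw_inv_into_left)
  from x obtain i where i: "i < ?n" "x $ i \<noteq> 0" by (auto simp: vec_eq_iff)
  show thesis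
  proof
    have "e i \<in> S" using e i by (auto dest: bij_betwE)
    then show "\<exists>v\<in>S. l v \<noteq> 0" using i(2) l_e[OF i(1)] by (intro bexI[of _ "e i"]) auto
  next
    fix u assume "u \<in> S"
    then obtain k where k: "k < ?n" "u = e k" using e unfolding bij_betw_def by force
    have "(\<Sum>v\<in>S. F u v * l v) = (\<Sum>j=0..<?n. F (e k) (e j) * l (e j))"
      unfolding k(2) by (rule sum.reindex_bij_betw[OF e, symmetric])
    also have "\<dots> = (?A *\<^sub>v x) $ k" using k x(1) l_e by (auto simp: scalar_prod_def)
    finally show "(\<Sum>v\<in>S. F u v * l v) = 0" using x(3) k by simp
  qed
qed

lemma det_on_const_poly:
  fixes F :: "'a \<Rightarrow> 'a \<Rightarrow> 'b::comm_ring_1"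
  shows "det_on S (\<lambda>u v. [:F u v:]) = [:det_on S F:]"
proof -
  have prod_const: "(\<Prod>v\<in>S. [:F v (p v):]) = [:\<Prod>v\<in>S. F v (p v):]" for p
    by (induct S rule: infinite_finite_induct) (auto simp: mult_to_poly)
  have sign_const: "(of_int (sign p) :: 'b poly) = [:of_int (sign p):]" for p
    by (simp add: of_int_poly)
  show ?thesis
    unfolding det_on_def sum_to_poly[symmetric]
    by (intro sum.cong refl) (simp only: prod_const sign_const mult_to_poly)
qed

lemma det_on_extend_identity:
  assumes fin: "finite S" and sub: "S1 \<subseteq> S"
    and id: "\<And>u v. u \<in> S - S1 \<Longrightarrow> v \<in> S \<Longrightarrow> F u v = (if u = v then 1 else 0)"
  shows "det_on S F = det_on S1 F"
proof -
  have vanish: "(\<Prod>v\<in>S. F v (p v)) = 0" if "p permutes S" "\<not> p permutes S1" for p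
  proof -
    have "\<exists>u\<in>S - S1. p u \<noteq> u"
    proof (rule ccontr)
      assume "\<not> ?thesis"
      then have "\<forall>x. x \<notin> S1 \<longrightarrow> p x = x" using that(1) permutes_not_in by fastforce
      then show False using that unfolding permutes_def by blast
    qed
    then obtain u where u: "u \<in> S - S1" "p u \<noteq> u" by blast
    have "F u (p u) = 0" using id[OF u(1)] u(2) permutes_in_image[OF that(1)] u(1) by simp
    thus ?thesis using u fin by (intro prod_zero) auto
  qed
  have "det_on S F = (\<Sum>p | p permutes S1. of_int (sign p) * (\<Prod>v\<in>S. F v (p v)))"
    unfolding det_on_def
    using vanish permutes_subset[OF _ sub] finite_permutations[OF fin]
    by (intro sum.mono_neutral_right) auto
  also have "\<dots> = det_on S1 F"
    unfolding det_on_def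
  proof (intro sum.cong refl arg_cong2[where f="(*)"])
    fix p assume "p \<in> {p. p permutes S1}"
    hence "(\<Prod>v\<in>S - S1. F v (p v)) = 1" using id by (intro prod.neutral) (auto simp: permutes_not_in)
    thus "(\<Prod>v\<in>S. F v (p v)) = (\<Prod>v\<in>S1. F v (p v))"
      using prod.subset_diff[OF sub fin, of "\<lambda>v. F v (p v)"] by simp
  qed
  finally show ?thesis .
qed

lemma det_on_block_triangular:
  assumes f1: "finite S1" and f2: "finite S2" and disj: "S1 \<inter> S2 = {}"
    and zero: "\<And>u v. u \<in> S1 \<Longrightarrow> v \<in> S2 \<Longrightarrow> F u v = 0"
  shows "det_on (S1 \<union> S2) F = det_on S1 F * det_on S2 F"
proof -
  let ?S = "S1 \<union> S2"
  define F1 where "F1 u v = (if u \<in> S1 then F u v else if u = v then 1 else 0)" for u v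
  define F2 where "F2 u v = (if u \<in> S2 then F u v else if u = v then 1 else 0)" for u v
  have fin: "finite ?S" using f1 f2 by simp
  have factor: "F u w = (\<Sum>v\<in>?S. F1 u v * F2 v w)" if "u \<in> ?S" "w \<in> ?S" for u w
  proof (cases "u \<in> S1")
    case True
    have "(\<Sum>v\<in>?S. F1 u v * F2 v w) = (\<Sum>v\<in>S1. F u v * F2 v w) + (\<Sum>v\<in>S2. F u v * F2 v w)"
      using True by (simp add: F1_def sum.union_disjoint[OF f1 f2 disj])
    also have "\<dots> = (\<Sum>v\<in>S1. if v = w then F u v else 0)"
      using True disj zero by (auto simp: F2_def intro!: sum.cong)
    finally show ?thesis using True that zero f1 by auto
  next
    case False
    hence "(\<Sum>v\<in>?S. F1 u v * F2 v w) = (\<Sum>v\<in>?S. if v = u then F2 v w else 0)"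
      by (intro sum.cong) (auto simp: F1_def)
    also have "\<dots> = F2 u w" using that fin by simp
    finally show ?thesis using False that by (simp add: F2_def)
  qed
  have "det_on ?S F = det_on ?S (\<lambda>u w. \<Sum>v\<in>?S. F1 u v * F2 v w)"
    using factor by (rule det_on_cong)
  also have "\<dots> = det_on ?S F1 * det_on ?S F2"
    by (rule det_on_mult[OF fin])
  also have "det_on ?S F1 = det_on S1 F"
    by (subst det_on_extend_identity[OF fin, of S1]) (auto simp: F1_def intro: det_on_cong)
  also have "det_on ?S F2 = det_on S2 F"
    using disj by (subst det_on_extend_identity[OF fin, of S2]) (auto simp: F2_def intro: det_on_cong)
  finally show ?thesis .
qed

lemma det_on_block_diagonal:
  assumes "finite K" and "\<And>k. k \<in> K \<Longrightarrow> finite (S k)"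
    and zero: "\<And>k k' u u'. k \<noteq> k' \<Longrightarrow> F (k, u) (k', u') = 0"
  shows "det_on (Sigma K S) F = (\<Prod>k\<in>K. det_on (S k) (\<lambda>u u'. F (k, u) (k, u')))"
  using assms(1,2)
proof (induction K rule: finite_induct)
  case empty
  then show ?case by (simp add: det_on_def)
next
  case (insert k K)
  have "Sigma (insert k K) S = ({k} \<times> S k) \<union> Sigma K S" by auto
  moreover have "det_on ({k} \<times> S k) F = det_on (S k) (\<lambda>u u'. F (k, u) (k, u'))"
    by (rule det_on_reindex) (use insert in \<open>auto simp: bij_betw_def inj_on_def\<close>)
  moreover have "det_on ({k} \<times> S k \<union> Sigma K S) F = det_on ({k} \<times> S k) F * det_on (Sigma K S) F"
    by (rule det_on_block_triangular) (use insert in \<open>auto intro!: zero\<close>)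
  ultimately have "det_on (Sigma (insert k K) S) F
      = det_on (S k) (\<lambda>u u'. F (k, u) (k, u')) * det_on (Sigma K S) F"
    by simp
  then show ?case using insert by simp
qed

definition char_mat :: "('a \<Rightarrow> 'a \<Rightarrow> complex) \<Rightarrow> 'a \<Rightarrow> 'a \<Rightarrow> complex poly" where
  "char_mat M u v = (if u = v then [:0, 1:] else 0) - [:M u v:]"

lemma charpoly_on_eq_det_on: "charpoly_on S M = det_on S (char_mat M)"
  unfolding charpoly_on_def det_on_def char_mat_def
  by (intro sum.cong refl arg_cong2[where f="(*)"] prod.cong) auto

lemma charpoly_on_cong:
  assumes "\<And>u v. u \<in> S \<Longrightarrow> v \<in> S \<Longrightarrow> M u v = M' u v"
  shows "charpoly_on S M = charpoly_on S M'"
  unfolding charpoly_on_eq_det_on by (rule det_on_cong) (simp add: assms char_mat_def)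

lemma charpoly_on_reindex:
  assumes bij: "bij_betw h S' S" and fin: "finite S'"
  shows "charpoly_on S M = charpoly_on S' (\<lambda>a b. M (h a) (h b))"
  unfolding charpoly_on_eq_det_on det_on_reindex[OF assms]
  using bij_betw_imp_inj_on[OF bij]
  by (intro det_on_cong) (auto simp: char_mat_def inj_on_def)

lemma charpoly_on_nonzero:
  assumes fin: "finite S"
  shows "charpoly_on S M \<noteq> 0"
proof -
  obtain e where e: "bij_betw e {0..<card S} S" using ex_bij_betw_nat_finite[OF fin] by blast
  let ?A = "mat (card S) (card S) (\<lambda>(i,j). M (e i) (e j))"
  have "charpoly_on S M = charpoly_on {0..<card S} (\<lambda>i j. M (e i) (e j))"
    by (rule charpoly_on_reindex[OF e]) simp
  also have "\<dots> = char_poly ?A"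
    unfolding charpoly_on_eq_det_on det_on_eq_det_mat char_poly_def char_poly_matrix_def
    by (rule arg_cong[where f=det]) (auto simp: char_mat_def)
  finally have "charpoly_on S M = char_poly ?A" .
  moreover have "coeff (char_poly ?A) (card S) = 1"
    using degree_monic_char_poly[of ?A "card S"] by simp
  ultimately show ?thesis by auto
qed

lemma sum_char_mat_mult_const:
  assumes "finite S" "u \<in> S"
  shows "(\<Sum>v\<in>S. char_mat M u v * [:T v w:]) = [:0, 1:] * [:T u w:] - [:\<Sum>v\<in>S. M u v * T v w:]"
proof -
  have "(\<Sum>v\<in>S. char_mat M u v * [:T v w:]) =
      (\<Sum>v\<in>S. if u = v then [:0, 1:] * [:T v w:] else 0) - (\<Sum>v\<in>S. [:M u v * T v w:])"
    unfolding char_mat_def sum_subtractf[symmetric]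
    by (intro sum.cong refl) (auto simp: algebra_simps mult_to_poly)
  then show ?thesis using assms by (simp add: sum_to_poly)
qed

lemma sum_const_mult_char_mat:
  assumes "finite S" "w \<in> S"
  shows "(\<Sum>v\<in>S. [:T u v:] * char_mat B v w) = [:0, 1:] * [:T u w:] - [:\<Sum>v\<in>S. T u v * B v w:]"
proof -
  have "(\<Sum>v\<in>S. [:T u v:] * char_mat B v w) =
      (\<Sum>v\<in>S. if v = w then [:0, 1:] * [:T u v:] else 0) - (\<Sum>v\<in>S. [:T u v * B v w:])"
    unfolding char_mat_def sum_subtractf[symmetric]
    by (intro sum.cong refl) (auto simp: algebra_simps mult_to_poly)
  then show ?thesis using assms by (simp add: sum_to_poly)
qed

lemma charpoly_on_similar:
  assumes fin: "finite S"
    and intertw: "\<And>u w. u \<in> S \<Longrightarrow> w \<in> S \<Longrightarrow> (\<Sum>v\<in>S. M u v * T v w) = (\<Sum>v\<in>S. T u v * B v w)"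
    and kernel: "\<And>l. (\<And>u. u \<in> S \<Longrightarrow> (\<Sum>v\<in>S. T u v * l v) = 0) \<Longrightarrow> \<forall>v\<in>S. l v = 0"
  shows "charpoly_on S M = charpoly_on S B"
proof -
  let ?T = "\<lambda>u v. [:T u v:]"
  have "det_on S T \<noteq> 0"
  proof
    assume "det_on S T = 0"
    then obtain l where "\<exists>v\<in>S. l v \<noteq> 0" "\<And>u. u \<in> S \<Longrightarrow> (\<Sum>v\<in>S. T u v * l v) = 0"
      by (rule det_on_eq_0_imp_nontrivial_kernel[OF fin]) auto
    with kernel show False by blast
  qed
  hence nz: "[:det_on S T:] \<noteq> 0" by simp
  have "det_on S (char_mat M) * [:det_on S T:] = det_on S (char_mat M) * det_on S ?T"
    by (simp add: det_on_const_poly)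
  also have "\<dots> = det_on S (\<lambda>u w. \<Sum>v\<in>S. char_mat M u v * ?T v w)"
    by (rule det_on_mult[OF fin, symmetric])
  also have "\<dots> = det_on S (\<lambda>u w. \<Sum>v\<in>S. ?T u v * char_mat B v w)"
    using fin by (intro det_on_cong) (simp only: sum_char_mat_mult_const sum_const_mult_char_mat intertw)
  also have "\<dots> = det_on S ?T * det_on S (char_mat B)"
    by (rule det_on_mult[OF fin])
  also have "\<dots> = det_on S (char_mat B) * [:det_on S T:]"
    by (simp add: det_on_const_poly)
  finally have "det_on S (char_mat M) = det_on S (char_mat B)"
    using nz by (rule mult_right_cancel[THEN iffD1, rotated])
  then show ?thesis by (simp add: charpoly_on_eq_det_on)
qed

lemma charpoly_on_eq_if_intertwined:
  assumes fin: "finite S" "finite S'" and card: "card S = card S'"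
    and intertw: "\<And>u w. u \<in> S \<Longrightarrow> w \<in> S' \<Longrightarrow> (\<Sum>v\<in>S. M u v * T v w) = (\<Sum>v\<in>S'. T u v * B v w)"
    and kernel: "\<And>l. (\<And>u. u \<in> S \<Longrightarrow> (\<Sum>v\<in>S'. T u v * l v) = 0) \<Longrightarrow> \<forall>v\<in>S'. l v = 0"
  shows "charpoly_on S M = charpoly_on S' B"
proof -
  obtain h where h: "bij_betw h S S'" using finite_same_card_bij[OF fin card] by blast
  have h_in: "h v \<in> S'" if "v \<in> S" for v using h that by (auto dest: bij_betwE)
  have "charpoly_on S M = charpoly_on S (\<lambda>v v'. B (h v) (h v'))"
  proof (rule charpoly_on_similar[OF fin(1), where T="\<lambda>u v. T u (h v)"])
    fix u w assume "u \<in> S" "w \<in> S"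
    then show "(\<Sum>v\<in>S. M u v * T v (h w)) = (\<Sum>v\<in>S. T u (h v) * B (h v) (h w))"
      using intertw h_in sum.reindex_bij_betw[OF h, where g="\<lambda>v. T u v * B v (h w)"] by simp
  next
    fix l assume l: "\<And>u. u \<in> S \<Longrightarrow> (\<Sum>v\<in>S. T u (h v) * l v) = 0"
    have zero: "\<forall>v\<in>S'. l (inv_into S h v) = 0"
    proof (rule kernel)
      fix u assume "u \<in> S"
      then show "(\<Sum>v\<in>S'. T u v * l (inv_into S h v)) = 0"
        using l sum.reindex_bij_betw[OF h, where g="\<lambda>v. T u v * l (inv_into S h v)"] h
        by (simp add: bij_betw_inv_into_left)
    qed
    show "\<forall>v\<in>S. l v = 0"
    proof
      fix v assume "v \<in> S"
      then have "l (inv_into S h (h v)) = 0" using zero h_in by blast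
      then show "l v = 0" using bij_betw_inv_into_left[OF h \<open>v \<in> S\<close>] by simp
    qed
  qed
  also have "\<dots> = charpoly_on S' B" by (rule charpoly_on_reindex[OF h fin(1), symmetric])
  finally show ?thesis .
qed

section \<open>Lifting operators to a cover by vertex-dependent partitions\<close>

lemma sum_Sigma_eq_nested:
  assumes "finite A" "\<And>a. a \<in> A \<Longrightarrow> finite (B a)"
  shows "(\<Sum>x\<in>Sigma A B. g x) = (\<Sum>a\<in>A. \<Sum>b\<in>B a. g (a, b))"
  using assms by (subst sum.Sigma) auto

definition avg :: "'c set \<Rightarrow> ('c \<Rightarrow> complex) \<Rightarrow> complex" where
  "avg B f = (\<Sum>c\<in>B. f c) / of_nat (card B)"

lemma avg_const:
  assumes "finite B" "c \<in> B" "\<And>c'. c' \<in> B \<Longrightarrow> f c' = f c"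
  shows "avg B f = f c"
proof -
  have "(\<Sum>c'\<in>B. f c') = of_nat (card B) * f c" using assms(3) by simp
  moreover have "card B \<noteq> 0" using assms(1,2) by auto
  ultimately show ?thesis by (simp add: avg_def)
qed

text \<open>The normalised Laplacian of copies (sheets) of a graph glued vertex-wise takes this form, the
  vertex \<open>(v, B)\<close> standing for the sheets in \<open>B\<close> glued over \<open>v\<close>.\<close>

definition lifted_op :: "('v \<Rightarrow> 'v \<Rightarrow> complex) \<Rightarrow> 'v \<times> 'c set \<Rightarrow> 'v \<times> 'c set \<Rightarrow> complex" where
  "lifted_op N x y = (if x = y then 1 else 0)
      - N (fst x) (fst y) * of_nat (card (snd x \<inter> snd y)) / of_nat (card (snd x))"

locale sheet_partitions =
  fixes V :: "'v set" and C :: "'c set" and P :: "'v \<Rightarrow> 'c set set"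
    and K :: "'k set" and supp :: "'k \<Rightarrow> 'v set" and b :: "'k \<Rightarrow> 'c \<Rightarrow> complex"
  assumes finite_V: "finite V" and finite_C: "finite C" and finite_K: "finite K"
    and partition: "v \<in> V \<Longrightarrow> partition_on C (P v)"
    and supp_subset: "k \<in> K \<Longrightarrow> supp k \<subseteq> V"
    and const_on_block: "k \<in> K \<Longrightarrow> u \<in> supp k \<Longrightarrow> B \<in> P u \<Longrightarrow> c \<in> B \<Longrightarrow> c' \<in> B \<Longrightarrow> b k c = b k c'"
    and sum_on_block: "k \<in> K \<Longrightarrow> v \<in> V \<Longrightarrow> v \<notin> supp k \<Longrightarrow> B \<in> P v \<Longrightarrow> (\<Sum>c\<in>B. b k c) = 0"
    and independent: "\<And>\<mu>. (\<And>c. c \<in> C \<Longrightarrow> (\<Sum>k\<in>K. \<mu> k * b k c) = 0) \<Longrightarrow> \<forall>k\<in>K. \<mu> k = 0"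
    and card_blocks: "v \<in> V \<Longrightarrow> card (P v) = card {k \<in> K. v \<in> supp k}"
begin

abbreviation "X \<equiv> Sigma V P"
abbreviation "Y \<equiv> Sigma K supp"

definition block_diag :: "('v \<Rightarrow> 'v \<Rightarrow> complex) \<Rightarrow> 'k \<times> 'v \<Rightarrow> 'k \<times> 'v \<Rightarrow> complex" where
  "block_diag N y y' =
     (if fst y = fst y' then (if snd y = snd y' then 1 else 0) - N (snd y) (snd y') else 0)"

definition intertwiner :: "'v \<times> 'c set \<Rightarrow> 'k \<times> 'v \<Rightarrow> complex" where
  "intertwiner x y = (if fst x = snd y then avg (snd x) (b (fst y)) else 0)"

lemma block_subset: "v \<in> V \<Longrightarrow> B \<in> P v \<Longrightarrow> B \<subseteq> C"
  using partition partition_onD1 by blast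

lemma finite_block: "v \<in> V \<Longrightarrow> B \<in> P v \<Longrightarrow> finite B"
  using block_subset finite_C finite_subset by blast

lemma finite_blocks: "v \<in> V \<Longrightarrow> finite (P v)"
  using finite_elements[OF finite_C partition] .

lemma finite_supp: "k \<in> K \<Longrightarrow> finite (supp k)"
  using supp_subset finite_V finite_subset by blast

lemma finite_X: "finite X" and finite_Y: "finite Y"
  using finite_V finite_blocks finite_K finite_supp by auto

lemma avg_eq_on_supp:
  "k \<in> K \<Longrightarrow> u \<in> supp k \<Longrightarrow> B \<in> P u \<Longrightarrow> c \<in> B \<Longrightarrow> avg B (b k) = b k c"
  using const_on_block supp_subset by (intro avg_const finite_block) blast+

lemma sum_split_by_blocks:
  assumes u: "u \<in> V" and B: "B \<subseteq> C"
  shows "(\<Sum>B'\<in>P u. \<Sum>c\<in>B \<inter> B'. f c) = (\<Sum>c\<in>B. f c)"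
proof -
  let ?g = "\<lambda>c. if c \<in> B then f c else 0"
  have "(\<Sum>c\<in>C. ?g c) = (\<Sum>c\<in>C \<inter> B. f c)" by (rule sum.inter_restrict[OF finite_C, symmetric])
  then have "(\<Sum>c\<in>B. f c) = (\<Sum>c\<in>C. ?g c)" using B by (simp add: Int_absorb1)
  also have "\<dots> = (\<Sum>c\<in>\<Union>(P u). ?g c)"
    using partition_onD1[OF partition[OF u]] by simp
  also have "\<dots> = (\<Sum>B'\<in>P u. \<Sum>c\<in>B'. ?g c)"
    using partition_onD2[OF partition[OF u]] finite_block[OF u]
    by (subst sum.Union_disjoint) (auto simp: disjoint_def)
  also have "\<dots> = (\<Sum>B'\<in>P u. \<Sum>c\<in>B \<inter> B'. f c)"
  proof (rule sum.cong[OF refl])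
    fix B' assume "B' \<in> P u"
    then show "(\<Sum>c\<in>B'. ?g c) = (\<Sum>c\<in>B \<inter> B'. f c)"
      using sum.inter_restrict[OF finite_block[OF u], of B' f B] by (simp only: Int_commute)
  qed
  finally show ?thesis ..
qed

lemma sum_overlap_avg:
  assumes k: "k \<in> K" and u: "u \<in> supp k" and v: "v \<in> V" and B: "B \<in> P v"
  shows "(\<Sum>B'\<in>P u. of_nat (card (B \<inter> B')) * avg B' (b k)) = of_nat (card B) * avg B (b k)"
proof -
  have uV: "u \<in> V" using supp_subset[OF k] u by blast
  have "card B \<noteq> 0"
    using finite_block[OF v B] B partition_onD3[OF partition[OF v]] by auto
  have "(\<Sum>B'\<in>P u. of_nat (card (B \<inter> B')) * avg B' (b k)) = (\<Sum>B'\<in>P u. \<Sum>c\<in>B \<inter> B'. b k c)"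
  proof (intro sum.cong refl)
    fix B' assume "B' \<in> P u"
    then have "(\<Sum>c\<in>B \<inter> B'. b k c) = (\<Sum>c\<in>B \<inter> B'. avg B' (b k))"
      using avg_eq_on_supp[OF k u] by (intro sum.cong) auto
    then show "of_nat (card (B \<inter> B')) * avg B' (b k) = (\<Sum>c\<in>B \<inter> B'. b k c)" by simp
  qed
  also have "\<dots> = of_nat (card B) * avg B (b k)"
    using sum_split_by_blocks[OF uV block_subset[OF v B]] \<open>card B \<noteq> 0\<close> by (simp add: avg_def)
  finally show ?thesis .
qed

lemma sum_lifted_op_avg:
  assumes k: "k \<in> K" and u: "u \<in> supp k" and v: "v \<in> V" and B: "B \<in> P v"
  shows "(\<Sum>B'\<in>P u. lifted_op N (v, B) (u, B') * avg B' (b k))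
      = (if v = u then avg B (b k) else 0) - N v u * avg B (b k)"
proof -
  have uV: "u \<in> V" using supp_subset[OF k] u by blast
  have "card B \<noteq> 0"
    using finite_block[OF v B] B partition_onD3[OF partition[OF v]] by auto
  have "lifted_op N (v, B) (u, B') * avg B' (b k) = (if (v, B) = (u, B') then avg B' (b k) else 0)
      - N v u / of_nat (card B) * (of_nat (card (B \<inter> B')) * avg B' (b k))" for B'
    unfolding lifted_op_def by (simp add: divide_inverse algebra_simps)
  then have "(\<Sum>B'\<in>P u. lifted_op N (v, B) (u, B') * avg B' (b k))
      = (\<Sum>B'\<in>P u. if (v, B) = (u, B') then avg B' (b k) else 0)
        - N v u / of_nat (card B) * (\<Sum>B'\<in>P u. of_nat (card (B \<inter> B')) * avg B' (b k))"
    by (simp add: sum_subtractf sum_distrib_left)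
  also have "(\<Sum>B'\<in>P u. if (v, B) = (u, B') then avg B' (b k) else 0) = (if v = u then avg B (b k) else 0)"
    using B finite_blocks[OF uV] by (cases "v = u") simp_all
  also have "N v u / of_nat (card B) * (\<Sum>B'\<in>P u. of_nat (card (B \<inter> B')) * avg B' (b k))
      = N v u * avg B (b k)"
    using sum_overlap_avg[OF assms] \<open>card B \<noteq> 0\<close> by simp
  finally show ?thesis .
qed

lemma lifted_op_intertwines:
  assumes x: "x \<in> X" and z: "z \<in> Y"
  shows "(\<Sum>x'\<in>X. lifted_op N x x' * intertwiner x' z) = (\<Sum>y\<in>Y. intertwiner x y * block_diag N y z)"
proof -
  obtain v B where xvB: "x = (v, B)" and v: "v \<in> V" and B: "B \<in> P v" using x by auto
  obtain k u where zku: "z = (k, u)" and k: "k \<in> K" and u: "u \<in> supp k" using z by auto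
  have uV: "u \<in> V" using supp_subset[OF k] u by blast
  let ?avg = "avg B (b k)"
  have "(\<Sum>x'\<in>X. lifted_op N x x' * intertwiner x' z) =
      (\<Sum>w\<in>V. \<Sum>B'\<in>P w. lifted_op N x (w, B') * intertwiner (w, B') z)"
    using finite_V finite_blocks by (rule sum_Sigma_eq_nested)
  also have "\<dots> = (\<Sum>w\<in>V. if w = u then \<Sum>B'\<in>P u. lifted_op N x (u, B') * avg B' (b k) else 0)"
    by (intro sum.cong refl) (auto simp: zku intertwiner_def)
  also have "\<dots> = (\<Sum>B'\<in>P u. lifted_op N (v, B) (u, B') * avg B' (b k))"
    using uV finite_V xvB by simp
  also have "\<dots> = (if v = u then ?avg else 0) - N v u * ?avg"
    by (rule sum_lifted_op_avg[OF k u v B])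
  also have "\<dots> = (if v \<in> supp k then ?avg * ((if v = u then 1 else 0) - N v u) else 0)"
  proof (cases "v \<in> supp k")
    case False
    then have "v \<noteq> u" "?avg = 0" using u sum_on_block[OF k v False B] by (auto simp: avg_def)
    then show ?thesis using False by simp
  qed (simp add: algebra_simps)
  also have "\<dots> = (\<Sum>w\<in>supp k. intertwiner x (k, w) * block_diag N (k, w) z)"
  proof -
    have "(\<Sum>w\<in>supp k. intertwiner x (k, w) * block_diag N (k, w) z)
        = (\<Sum>w\<in>supp k. if w = v then ?avg * ((if v = u then 1 else 0) - N v u) else 0)"
      by (intro sum.cong) (auto simp: xvB zku intertwiner_def block_diag_def)
    then show ?thesis using finite_supp[OF k] by simp
  qed
  also have "\<dots> = (\<Sum>k'\<in>K. \<Sum>w\<in>supp k'. intertwiner x (k', w) * block_diag N (k', w) z)"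
  proof -
    have "(\<Sum>k'\<in>K. \<Sum>w\<in>supp k'. intertwiner x (k', w) * block_diag N (k', w) z)
        = (\<Sum>k'\<in>K. if k' = k then \<Sum>w\<in>supp k. intertwiner x (k, w) * block_diag N (k, w) z else 0)"
      by (intro sum.cong refl) (auto simp: zku block_diag_def)
    then show ?thesis using finite_K k by simp
  qed
  also have "\<dots> = (\<Sum>y\<in>Y. intertwiner x y * block_diag N y z)"
    using finite_K finite_supp by (rule sum_Sigma_eq_nested[symmetric])
  finally show ?thesis .
qed

lemma intertwiner_kernel:
  assumes l: "\<And>x. x \<in> X \<Longrightarrow> (\<Sum>y\<in>Y. intertwiner x y * l y) = 0" and y: "y \<in> Y"
  shows "l y = 0"
proof -
  obtain k0 u where y: "y = (k0, u)" and k0: "k0 \<in> K" and u: "u \<in> supp k0" using y by auto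
  have uV: "u \<in> V" using supp_subset[OF k0] u by blast
  define \<mu> where "\<mu> k = (if u \<in> supp k then l (k, u) else 0)" for k
  have "(\<Sum>k\<in>K. \<mu> k * b k c) = 0" if c: "c \<in> C" for c
  proof -
    obtain B where B: "B \<in> P u" "c \<in> B" using partition_onD1[OF partition[OF uV]] c by blast
    have "(\<Sum>w\<in>supp k. intertwiner (u, B) (k, w) * l (k, w)) = \<mu> k * b k c" if k: "k \<in> K" for k
    proof -
      have "(\<Sum>w\<in>supp k. intertwiner (u, B) (k, w) * l (k, w))
          = (\<Sum>w\<in>supp k. if w = u then avg B (b k) * l (k, u) else 0)"
        by (intro sum.cong) (auto simp: intertwiner_def)
      then show ?thesis using avg_eq_on_supp[OF k _ B] finite_supp[OF k] by (simp add: \<mu>_def)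
    qed
    then have "(\<Sum>k\<in>K. \<mu> k * b k c) = (\<Sum>y\<in>Y. intertwiner (u, B) y * l y)"
      using finite_K finite_supp by (simp add: sum_Sigma_eq_nested)
    also have "\<dots> = 0" using l B(1) uV by auto
    finally show ?thesis .
  qed
  then have "\<mu> k0 = 0" using independent k0 by blast
  then show ?thesis using y u by (simp add: \<mu>_def)
qed

lemma card_X_eq_card_Y: "card X = card Y"
proof -
  have "card X = (\<Sum>v\<in>V. card (P v))" using finite_V finite_blocks by simp
  also have "\<dots> = (\<Sum>v\<in>V. \<Sum>k\<in>K. of_bool (v \<in> supp k))"
    using card_blocks finite_K by (simp add: Int_def)
  also have "\<dots> = (\<Sum>k\<in>K. \<Sum>v\<in>V. of_bool (v \<in> supp k))" by (rule sum.swap)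
  also have "\<dots> = (\<Sum>k\<in>K. card (supp k))"
    using finite_V supp_subset by (intro sum.cong refl) (simp add: Int_absorb1)
  also have "\<dots> = card Y" using finite_K finite_supp by simp
  finally show ?thesis .
qed

lemma charpoly_block_diag:
  "charpoly_on Y (block_diag N) = (\<Prod>k\<in>K. charpoly_on (supp k) (\<lambda>v u. (if v = u then 1 else 0) - N v u))"
  unfolding charpoly_on_eq_det_on
  by (subst det_on_block_diagonal[OF finite_K finite_supp])
     (auto simp: char_mat_def block_diag_def intro!: prod.cong det_on_cong)

theorem charpoly_lifted_op:
  "charpoly_on X (lifted_op N) = (\<Prod>k\<in>K. charpoly_on (supp k) (\<lambda>v u. (if v = u then 1 else 0) - N v u))"
proof -
  have "charpoly_on X (lifted_op N) = charpoly_on Y (block_diag N)"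
  proof (rule charpoly_on_eq_if_intertwined[OF finite_X finite_Y card_X_eq_card_Y lifted_op_intertwines])
    fix l assume "\<And>x. x \<in> X \<Longrightarrow> (\<Sum>y\<in>Y. intertwiner x y * l y) = 0"
    then show "\<forall>y\<in>Y. l y = 0" using intertwiner_kernel by blast
  qed
  then show ?thesis by (simp add: charpoly_block_diag)
qed

end
section \<open>The contracted A-union as a lift of the base graph\<close>

definition transition :: "('v, 'e) mgraph \<Rightarrow> 'v \<Rightarrow> 'v \<Rightarrow> complex" where
  "transition G v u = (\<Sum>e\<in>{e\<in>out_edges G v. mg_tgt G e = u}.
      complex_of_real (mg_w G e) * exp (\<i> * complex_of_real (mg_alpha G e))) / complex_of_real (wdeg G v)"

lemma lap_eq_transition: "lap G v u = (if v = u then 1 else 0) - transition G v u"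
  by (simp add: lap_def transition_def)

locale contracted_union =
  fixes G :: "('v, 'e) mgraph" and V0 V1 :: "'v set" and A :: "nat multiset"
  assumes magnetic: "magnetic_graph G" and V1_subset: "V1 \<subseteq> V0" and V0_subset: "V0 \<subseteq> mg_V G"
    and no_zero_part: "0 \<notin># A" and A_nonempty: "A \<noteq> {#}"
begin

abbreviation "V \<equiv> mg_V G"
abbreviation "parts \<equiv> sorted_list_of_multiset A"
abbreviation "nparts \<equiv> length parts"
abbreviation "part i \<equiv> parts ! i"
abbreviation "H \<equiv> contracted_A_union G V0 A V1"
abbreviation "CR \<equiv> contr_rel G V0 A V1"

text \<open>Sheet \<open>(i, j)\<close> is the copy \<open>G \<times> {j}\<close> inside the frame member \<open>F\<^bsub>a\<^sub>i\<^esub>\<close>; every vertex and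
  edge of the contracted A-union is the image of a vertex or edge of \<open>G\<close> on some sheet, and over
  \<open>v\<close> the sheet \<open>c\<close> is identified exactly with the sheets in \<open>glued v c\<close>.\<close>

definition sheets :: "(nat \<times> nat) set" where
  "sheets = Sigma {..<nparts} (\<lambda>i. {..<part i})"

definition frame_vertex :: "nat \<Rightarrow> 'v \<Rightarrow> nat \<Rightarrow> ('v \<times> nat) set" where
  "frame_vertex i v j = frame_rel G V0 (part i) `` {(v, j)}"

definition glued :: "'v \<Rightarrow> nat \<times> nat \<Rightarrow> (nat \<times> nat) set" where
  "glued v c = (if v \<in> V1 then sheets else if v \<in> V0 then {fst c} \<times> {..<part (fst c)} else {c})"

definition sheet_blocks :: "'v \<Rightarrow> (nat \<times> nat) set set" where
  "sheet_blocks v = glued v ` sheets"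

definition vertex_of :: "'v \<times> (nat \<times> nat) set \<Rightarrow> (('v \<times> nat) set \<times> nat) set" where
  "vertex_of x = (\<lambda>(i, j). (frame_vertex i (fst x) j, i)) ` snd x"

definition edge_of :: "'e \<times> nat \<times> nat \<Rightarrow> ('e \<times> nat) \<times> nat" where
  "edge_of = (\<lambda>(e, i, j). ((e, j), i))"

lemma finite_V: "finite V" and finite_E: "finite (mg_E G)"
  and src_in_V: "e \<in> mg_E G \<Longrightarrow> mg_src G e \<in> V" and tgt_in_V: "e \<in> mg_E G \<Longrightarrow> mg_tgt G e \<in> V"
  using magnetic unfolding magnetic_graph_def by auto

lemma nparts_pos: "nparts > 0"
  using A_nonempty by (cases A) auto

lemma part_pos: "i < nparts \<Longrightarrow> part i > 0"
proof -
  assume "i < nparts"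
  then have "part i \<in># A" using nth_mem set_sorted_list_of_multiset by metis
  then show "part i > 0" using no_zero_part by (auto intro: gr0I)
qed

lemma nparts_eq_size: "nparts = size A"
  by (metis mset_sorted_list_of_multiset size_mset)

lemma sum_parts: "sum_mset A = (\<Sum>i<nparts. part i)"
proof -
  have "sum_mset A = sum_list parts" by (metis mset_sorted_list_of_multiset sum_mset_sum_list)
  then show ?thesis by (simp add: sum_list_sum_nth atLeast0LessThan)
qed

lemma mem_sheets [simp]: "(i, j) \<in> sheets \<longleftrightarrow> i < nparts \<and> j < part i"
  by (simp add: sheets_def)

lemma finite_sheets: "finite sheets"
  by (simp add: sheets_def)

lemma mem_frame_vertex:
  "v \<in> V \<Longrightarrow> j < part i \<Longrightarrow> (w, l) \<in> frame_vertex i v j \<longleftrightarrow> w = v \<and> l < part i \<and> (v \<in> V0 \<or> l = j)"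
  unfolding frame_vertex_def frame_rel_def using V0_subset by auto

lemma frame_vertex_eq_iff:
  assumes "v \<in> V" "v' \<in> V" "j < part i" "j' < part i"
  shows "frame_vertex i v j = frame_vertex i v' j' \<longleftrightarrow> v = v' \<and> (v \<in> V0 \<or> j = j')"
proof
  assume "frame_vertex i v j = frame_vertex i v' j'"
  then have "(v, j) \<in> frame_vertex i v' j'" using mem_frame_vertex[OF assms(1,3)] assms(3) by blast
  then show "v = v' \<and> (v \<in> V0 \<or> j = j')" using mem_frame_vertex[OF assms(2,4)] by auto
qed (use assms mem_frame_vertex in auto)

lemma union_vertices:
  "mg_V (A_union G V0 A) = {(frame_vertex i v j, i) | v i j. v \<in> V \<and> (i, j) \<in> sheets}"
  unfolding A_union_def Let_def dunion_def frame_def contract_def copies_def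
  by (auto simp: quotient_def frame_vertex_def)

lemma union_vertex_eq_iff:
  assumes "v \<in> V" "v' \<in> V" "(i, j) \<in> sheets" "(i', j') \<in> sheets"
  shows "(frame_vertex i v j, i) = (frame_vertex i' v' j', i') \<longleftrightarrow> i = i' \<and> v = v' \<and> (v \<in> V0 \<or> j = j')"
proof (cases "i = i'")
  case True
  then show ?thesis using frame_vertex_eq_iff[of v v' j i j'] assms by simp
qed simp

lemma contr_rel_iff:
  assumes v: "v \<in> V" and v': "v' \<in> V" and c: "(i, j) \<in> sheets" and c': "(i', j') \<in> sheets"
  shows "((frame_vertex i v j, i), (frame_vertex i' v' j', i')) \<in> CR \<longleftrightarrow> v' = v \<and> (i', j') \<in> glued v (i, j)"
proof -
  have V1_V: "V1 \<subseteq> V" using V1_subset V0_subset by blast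
  have glue_V1: "(\<exists>v1\<in>V1. frame_vertex i v j = frame_vertex i v1 0 \<and> frame_vertex i' v' j' = frame_vertex i' v1 0)
      \<longleftrightarrow> v \<in> V1 \<and> v' = v"
  proof
    assume "\<exists>v1\<in>V1. frame_vertex i v j = frame_vertex i v1 0 \<and> frame_vertex i' v' j' = frame_vertex i' v1 0"
    then obtain v1 where "v1 \<in> V1" "frame_vertex i v j = frame_vertex i v1 0"
      "frame_vertex i' v' j' = frame_vertex i' v1 0" by blast
    then show "v \<in> V1 \<and> v' = v"
      using frame_vertex_eq_iff v v' c c' V1_V part_pos[of i] part_pos[of i'] by auto
  next
    assume "v \<in> V1 \<and> v' = v"
    then show "\<exists>v1\<in>V1. frame_vertex i v j = frame_vertex i v1 0 \<and> frame_vertex i' v' j' = frame_vertex i' v1 0"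
      using frame_vertex_eq_iff v c c' V1_subset part_pos[of i] part_pos[of i'] by (intro bexI[of _ v]) auto
  qed
  have "((frame_vertex i v j, i), (frame_vertex i' v' j', i')) \<in> CR \<longleftrightarrow>
      (frame_vertex i v j, i) = (frame_vertex i' v' j', i') \<or>
      (\<exists>v1\<in>V1. frame_vertex i v j = frame_vertex i v1 0 \<and> frame_vertex i' v' j' = frame_vertex i' v1 0)"
    unfolding contr_rel_def Let_def union_vertices frame_cls_def frame_vertex_def[symmetric]
    using v v' c c' by blast
  also have "\<dots> \<longleftrightarrow> v' = v \<and> (i', j') \<in> glued v (i, j)"
    unfolding glue_V1 union_vertex_eq_iff[OF v v' c c'] using c' V1_subset by (auto simp: glued_def)
  finally show ?thesis .
qed

lemma glued_subset: "glued v c \<subseteq> sheets" if "c \<in> sheets"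
  using that by (cases c) (auto simp: glued_def)

lemma glued_self: "c \<in> glued v c" if "c \<in> sheets"
  using that by (cases c) (auto simp: glued_def)

lemma glued_eq: "c' \<in> glued v c \<Longrightarrow> glued v c' = glued v c"
  by (cases c; cases c') (auto simp: glued_def split: if_splits)

lemma partition_sheet_blocks: "partition_on sheets (sheet_blocks v)"
proof (rule partition_onI)
  show "\<Union>(sheet_blocks v) = sheets"
  proof (intro equalityI subsetI)
    fix c assume "c \<in> \<Union>(sheet_blocks v)"
    then obtain c0 where "c0 \<in> sheets" "c \<in> glued v c0" by (auto simp: sheet_blocks_def)
    then show "c \<in> sheets" using glued_subset by blast
  next
    fix c assume "c \<in> sheets"
    then show "c \<in> \<Union>(sheet_blocks v)"
      using glued_self by (intro UnionI[of "glued v c"]) (auto simp: sheet_blocks_def)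
  qed
next
  fix B B' assume "B \<in> sheet_blocks v" "B' \<in> sheet_blocks v" and B_ne: "B \<noteq> B'"
  then obtain c1 c2 where B_eq: "B = glued v c1" and B'_eq: "B' = glued v c2"
    by (auto simp: sheet_blocks_def)
  show "disjnt B B'"
    unfolding disjnt_iff
  proof (intro allI notI)
    fix c assume "c \<in> B \<and> c \<in> B'"
    then have "glued v c = glued v c1" "glued v c = glued v c2"
      using B_eq B'_eq by (simp_all add: glued_eq)
    then show False using B_ne B_eq B'_eq by simp
  qed
next
  show "{} \<notin> sheet_blocks v"
  proof
    assume "{} \<in> sheet_blocks v"
    then obtain c where "c \<in> sheets" "glued v c = {}" by (auto simp: sheet_blocks_def)
    then show False using glued_self[of c v] by simp
  qed
qed

lemma contr_class:
  assumes v: "v \<in> V" and c: "(i, j) \<in> sheets"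
  shows "CR `` {(frame_vertex i v j, i)} = vertex_of (v, glued v (i, j))"
proof (intro equalityI subsetI)
  fix q assume "q \<in> CR `` {(frame_vertex i v j, i)}"
  then have q: "((frame_vertex i v j, i), q) \<in> CR" by simp
  then have "q \<in> mg_V (A_union G V0 A)" by (cases q) (simp add: contr_rel_def Let_def)
  then obtain v' i' j' where q_eq: "q = (frame_vertex i' v' j', i')" and v': "v' \<in> V"
    and c': "(i', j') \<in> sheets"
    unfolding union_vertices by blast
  then have "v' = v" "(i', j') \<in> glued v (i, j)" using q contr_rel_iff[OF v v' c c'] by auto
  then show "q \<in> vertex_of (v, glued v (i, j))" unfolding q_eq vertex_of_def by force
next
  fix q assume "q \<in> vertex_of (v, glued v (i, j))"
  then obtain i' j' where c': "(i', j') \<in> glued v (i, j)" and q_eq: "q = (frame_vertex i' v j', i')"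
    by (auto simp: vertex_of_def)
  moreover have "(i', j') \<in> sheets" using c' glued_subset[OF c] by blast
  ultimately show "q \<in> CR `` {(frame_vertex i v j, i)}"
    using contr_rel_iff[OF v v c] c' by simp
qed

abbreviation "X \<equiv> Sigma V sheet_blocks"

lemma glued_same_member: "(i, j) \<in> sheets \<Longrightarrow> v \<in> V0 \<Longrightarrow> (i, j) \<in> glued v (i, j')"
  by (auto simp: glued_def)

lemma vertex_of_glued_eq_iff:
  assumes v: "v \<in> V" and c: "c \<in> sheets" and u: "u \<in> V" and B: "B \<in> sheet_blocks u"
  shows "vertex_of (v, glued v c) = vertex_of (u, B) \<longleftrightarrow> v = u \<and> c \<in> B"
proof
  assume eq: "vertex_of (v, glued v c) = vertex_of (u, B)"
  obtain i j where cij: "c = (i, j)" by (cases c)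
  obtain c0 where c0: "c0 \<in> sheets" and B_eq: "B = glued u c0" using B by (auto simp: sheet_blocks_def)
  have "(frame_vertex i v j, i) \<in> vertex_of (v, glued v c)"
    using glued_self[OF c] cij by (force simp: vertex_of_def)
  then obtain j' where j': "(i, j') \<in> B" and fv: "frame_vertex i v j = frame_vertex i u j'"
    using eq by (auto simp: vertex_of_def)
  have "(i, j') \<in> sheets" using j' c0 B_eq glued_subset by blast
  then have vu: "v = u" and "v \<in> V0 \<or> j = j'"
    using fv c cij v u frame_vertex_eq_iff by auto
  moreover have "glued u (i, j') = B" using j' B_eq glued_eq by simp
  ultimately have "c \<in> B" using glued_same_member[of i j u j'] c cij j' by auto
  then show "v = u \<and> c \<in> B" using vu by simp
next
  assume vu: "v = u \<and> c \<in> B"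
  obtain c0 where "B = glued u c0" using B by (auto simp: sheet_blocks_def)
  then have "glued v c = B" using vu glued_eq by simp
  then show "vertex_of (v, glued v c) = vertex_of (u, B)" using vu by simp
qed

lemma bij_vertex_of: "bij_betw vertex_of X (mg_V H)"
proof -
  have "mg_V H = {CR `` {p} | p. p \<in> mg_V (A_union G V0 A)}"
    by (auto simp: contracted_A_union_def contract_def quotient_def)
  also have "\<dots> = {vertex_of (v, glued v c) | v c. v \<in> V \<and> c \<in> sheets}"
  proof (intro equalityI subsetI)
    fix z assume "z \<in> {CR `` {p} | p. p \<in> mg_V (A_union G V0 A)}"
    then obtain v i j where "z = CR `` {(frame_vertex i v j, i)}" "v \<in> V" "(i, j) \<in> sheets"
      unfolding union_vertices by blast
    then show "z \<in> {vertex_of (v, glued v c) | v c. v \<in> V \<and> c \<in> sheets}"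
      using contr_class by blast
  next
    fix z assume "z \<in> {vertex_of (v, glued v c) | v c. v \<in> V \<and> c \<in> sheets}"
    then obtain v i j where "z = vertex_of (v, glued v (i, j))" "v \<in> V" "(i, j) \<in> sheets" by auto
    then show "z \<in> {CR `` {p} | p. p \<in> mg_V (A_union G V0 A)}"
      using contr_class unfolding union_vertices by blast
  qed
  also have "\<dots> = vertex_of ` X"
    unfolding sheet_blocks_def by blast
  finally have "mg_V H = vertex_of ` X" .
  moreover have "inj_on vertex_of X"
  proof
    fix x y assume x: "x \<in> X" and y: "y \<in> X" and eq: "vertex_of x = vertex_of y"
    obtain v c where x_eq: "x = (v, glued v c)" and v: "v \<in> V" and c: "c \<in> sheets"
      using x by (auto simp: sheet_blocks_def)
    obtain u B where y_eq: "y = (u, B)" and u: "u \<in> V" and B: "B \<in> sheet_blocks u" using y by auto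
    obtain c0 where B_eq: "B = glued u c0" using B by (auto simp: sheet_blocks_def)
    have "v = u" "c \<in> B" using eq vertex_of_glued_eq_iff[OF v c u B] x_eq y_eq by auto
    then show "x = y" using glued_eq B_eq x_eq y_eq by simp
  qed
  ultimately show ?thesis by (simp add: bij_betw_def)
qed

lemma edges: "mg_E H = edge_of ` (mg_E G \<times> sheets)"
proof (intro equalityI subsetI)
  fix \<epsilon> assume "\<epsilon> \<in> mg_E H"
  then obtain e i j where "\<epsilon> = ((e, j), i)" "e \<in> mg_E G" "(i, j) \<in> sheets"
    by (auto simp: contracted_A_union_def contract_def A_union_def Let_def dunion_def frame_def
        copies_def)
  then show "\<epsilon> \<in> edge_of ` (mg_E G \<times> sheets)"
    by (intro image_eqI[of _ _ "(e, i, j)"]) (auto simp: edge_of_def)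
qed (auto simp: contracted_A_union_def contract_def A_union_def Let_def dunion_def frame_def
      copies_def edge_of_def)

lemma edge_of_inj: "inj edge_of"
  by (auto simp: inj_def edge_of_def)

lemma edge_weights [simp]:
  "mg_w H (edge_of (e, c)) = mg_w G e" "mg_alpha H (edge_of (e, c)) = mg_alpha G e"
  by (cases c; simp add: contracted_A_union_def contract_def A_union_def Let_def dunion_def
      frame_def copies_def edge_of_def)+

lemma edge_ends:
  assumes e: "e \<in> mg_E G" and c: "c \<in> sheets"
  shows "mg_src H (edge_of (e, c)) = vertex_of (mg_src G e, glued (mg_src G e) c)"
    and "mg_tgt H (edge_of (e, c)) = vertex_of (mg_tgt G e, glued (mg_tgt G e) c)"
proof -
  obtain i j where c_eq: "c = (i, j)" by (cases c)
  show "mg_src H (edge_of (e, c)) = vertex_of (mg_src G e, glued (mg_src G e) c)"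
    using contr_class[OF src_in_V[OF e], of i j] c c_eq
    by (simp add: contracted_A_union_def contract_def A_union_def Let_def dunion_def
      frame_def copies_def frame_vertex_def edge_of_def)
  show "mg_tgt H (edge_of (e, c)) = vertex_of (mg_tgt G e, glued (mg_tgt G e) c)"
    using contr_class[OF tgt_in_V[OF e], of i j] c c_eq
    by (simp add: contracted_A_union_def contract_def A_union_def Let_def dunion_def
      frame_def copies_def frame_vertex_def edge_of_def)
qed

lemma out_edges_H:
  assumes v: "v \<in> V" and B: "B \<in> sheet_blocks v"
  shows "out_edges H (vertex_of (v, B)) = edge_of ` (out_edges G v \<times> B)"
proof (intro equalityI subsetI)
  fix \<epsilon> assume "\<epsilon> \<in> out_edges H (vertex_of (v, B))"
  then obtain e c where \<epsilon>: "\<epsilon> = edge_of (e, c)" and e: "e \<in> mg_E G" and c: "c \<in> sheets"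
    and "mg_src H \<epsilon> = vertex_of (v, B)"
    by (auto simp: out_edges_def edges)
  then have "mg_src G e = v" "c \<in> B"
    using edge_ends(1)[OF e c] vertex_of_glued_eq_iff[OF src_in_V[OF e] c v B] by auto
  then show "\<epsilon> \<in> edge_of ` (out_edges G v \<times> B)" using \<epsilon> e by (auto simp: out_edges_def)
next
  fix \<epsilon> assume "\<epsilon> \<in> edge_of ` (out_edges G v \<times> B)"
  then obtain e c where \<epsilon>: "\<epsilon> = edge_of (e, c)" and e: "e \<in> mg_E G" "mg_src G e = v"
    and cB: "c \<in> B"
    by (auto simp: out_edges_def)
  have c: "c \<in> sheets" using cB B glued_subset by (auto simp: sheet_blocks_def)
  have "mg_src H \<epsilon> = vertex_of (v, B)"
    using edge_ends(1)[OF e(1) c] vertex_of_glued_eq_iff[OF src_in_V[OF e(1)] c v B] e(2) cB \<epsilon>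
    by simp
  then show "\<epsilon> \<in> out_edges H (vertex_of (v, B))" using \<epsilon> e(1) c by (auto simp: out_edges_def edges)
qed

lemma edges_between_H:
  assumes v: "v \<in> V" and B: "B \<in> sheet_blocks v" and u: "u \<in> V" and B': "B' \<in> sheet_blocks u"
  shows "{\<epsilon> \<in> out_edges H (vertex_of (v, B)). mg_tgt H \<epsilon> = vertex_of (u, B')}
      = edge_of ` ({e \<in> out_edges G v. mg_tgt G e = u} \<times> (B \<inter> B'))"
proof -
  have tgt_iff: "mg_tgt H (edge_of (e, c)) = vertex_of (u, B') \<longleftrightarrow> mg_tgt G e = u \<and> c \<in> B'"
    if "e \<in> out_edges G v" "c \<in> B" for e c
  proof -
    have "e \<in> mg_E G" "c \<in> sheets"
      using that B glued_subset by (auto simp: out_edges_def sheet_blocks_def)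
    then show ?thesis using edge_ends(2) vertex_of_glued_eq_iff[OF tgt_in_V _ u B'] by simp
  qed
  have "{\<epsilon> \<in> edge_of ` (out_edges G v \<times> B). mg_tgt H \<epsilon> = vertex_of (u, B')}
      = edge_of ` {(e, c) \<in> out_edges G v \<times> B. mg_tgt H (edge_of (e, c)) = vertex_of (u, B')}"
    by blast
  also have "{(e, c) \<in> out_edges G v \<times> B. mg_tgt H (edge_of (e, c)) = vertex_of (u, B')}
      = {e \<in> out_edges G v. mg_tgt G e = u} \<times> (B \<inter> B')"
    using tgt_iff by auto
  finally show ?thesis
    unfolding out_edges_H[OF v B] .
qed

lemma sum_edge_of:
  assumes "finite S" "S \<subseteq> mg_E G" "finite T" "T \<subseteq> sheets"
  shows "(\<Sum>\<epsilon>\<in>edge_of ` (S \<times> T). h (mg_w H \<epsilon>) (mg_alpha H \<epsilon>)) =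
      of_nat (card T) * (\<Sum>e\<in>S. h (mg_w G e) (mg_alpha G e))"
proof -
  have "(\<Sum>\<epsilon>\<in>edge_of ` (S \<times> T). h (mg_w H \<epsilon>) (mg_alpha H \<epsilon>)) =
      (\<Sum>(e, c)\<in>S \<times> T. h (mg_w G e) (mg_alpha G e))"
    unfolding sum.reindex[OF inj_on_subset[OF edge_of_inj subset_UNIV]]
    by (intro sum.cong) auto
  then show ?thesis
    by (simp add: sum.cartesian_product[symmetric] sum_distrib_left mult.commute)
qed

lemma lap_H:
  assumes x: "x \<in> X" and y: "y \<in> X"
  shows "lap H (vertex_of x) (vertex_of y) = lifted_op (transition G) x y"
proof -
  obtain v B where xv: "x = (v, B)" and v: "v \<in> V" and B: "B \<in> sheet_blocks v" using x by auto
  obtain u B' where yu: "y = (u, B')" and u: "u \<in> V" and B': "B' \<in> sheet_blocks u" using y by auto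
  have BC: "B \<subseteq> sheets" using B glued_subset by (auto simp: sheet_blocks_def)
  have fin: "finite B" using BC finite_sheets finite_subset by blast
  have fin_out: "finite (out_edges G v)" using finite_E by (simp add: out_edges_def)
  have out_E: "out_edges G v \<subseteq> mg_E G" by (auto simp: out_edges_def)
  let ?wt = "\<lambda>w al. complex_of_real w * exp (\<i> * complex_of_real al)"
  have edges_sum: "(\<Sum>\<epsilon>\<in>{\<epsilon>\<in>out_edges H (vertex_of (v, B)). mg_tgt H \<epsilon> = vertex_of (u, B')}.
        ?wt (mg_w H \<epsilon>) (mg_alpha H \<epsilon>))
      = of_nat (card (B \<inter> B')) * (\<Sum>e\<in>{e\<in>out_edges G v. mg_tgt G e = u}. ?wt (mg_w G e) (mg_alpha G e))"
    unfolding edges_between_H[OF v B u B'] using fin fin_out out_E BC by (intro sum_edge_of) auto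
  have wdeg_H: "wdeg H (vertex_of (v, B)) = real (card B) * wdeg G v"
    unfolding wdeg_def out_edges_H[OF v B]
    using sum_edge_of[OF fin_out out_E fin BC, where h="\<lambda>w al. w"] by simp
  have "vertex_of (v, B) = vertex_of (u, B') \<longleftrightarrow> (v, B) = (u, B')"
    using bij_vertex_of x y xv yu by (auto simp: bij_betw_def inj_on_def)
  then show ?thesis
    unfolding xv yu lap_def lifted_op_def transition_def edges_sum wdeg_H
    by (simp add: divide_inverse inverse_mult_distrib mult_ac)
qed

lemma charpoly_H: "charpoly_on (mg_V H) (lap H) = charpoly_on X (lifted_op (transition G))"
proof -
  have "finite X"
    using finite_V finite_sheets by (auto simp: sheet_blocks_def)
  then show ?thesis
    using lap_H by (simp add: charpoly_on_reindex[OF bij_vertex_of] cong: charpoly_on_cong)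
qed

end
section \<open>Test vectors on the sheets\<close>

context contracted_union
begin

text \<open>The test vectors are indexed by the sheets themselves: \<open>(0, 0)\<close> is constant; \<open>(i, 0)\<close> with
  \<open>i > 0\<close> weighs frame member \<open>i\<close> against member \<open>0\<close>, so it sums to zero over all sheets; \<open>(i, j)\<close>
  with \<open>j > 0\<close> is the difference of the sheets \<open>(i, j)\<close> and \<open>(i, 0)\<close>, so it sums to zero over
  each frame member.\<close>

definition test_supp :: "nat \<times> nat \<Rightarrow> 'v set" where
  "test_supp k = (if k = (0, 0) then V else if snd k = 0 then V - V1 else V - V0)"

definition test_vec :: "nat \<times> nat \<Rightarrow> nat \<times> nat \<Rightarrow> complex" where
  "test_vec k c =
     (if k = (0, 0) then 1
      else if snd k = 0
      then (if fst c = fst k then of_nat (part 0) else 0) - (if fst c = 0 then of_nat (part (fst k)) else 0)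
      else (if c = k then 1 else 0) - (if c = (fst k, 0) then 1 else 0))"

definition member_sum :: "nat \<times> nat \<Rightarrow> nat \<Rightarrow> complex" where
  "member_sum k i =
     (if k = (0, 0) then of_nat (part i)
      else if snd k = 0
      then (if i = fst k then of_nat (part i) * of_nat (part 0) else 0)
        - (if i = 0 then of_nat (part i) * of_nat (part (fst k)) else 0)
      else 0)"

lemma sum_test_vec_member:
  assumes k: "k \<in> sheets" and i: "i < nparts"
  shows "(\<Sum>c\<in>{i} \<times> {..<part i}. test_vec k c) = member_sum k i"
proof -
  obtain i0 j0 where k_eq: "k = (i0, j0)" by (cases k)
  have "(\<Sum>c\<in>{i} \<times> {..<part i}. test_vec k c) = (\<Sum>j<part i. test_vec k (i, j))"
    by (simp add: sum.cartesian_product')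
  also have "\<dots> = member_sum k i"
  proof (cases "j0 = 0")
    case True
    then show ?thesis by (simp add: k_eq test_vec_def member_sum_def)
  next
    case False
    have "(\<Sum>j<part i. test_vec k (i, j))
        = (\<Sum>j<part i. if i = i0 \<and> j = j0 then 1 else 0) - (\<Sum>j<part i. if i = i0 \<and> j = 0 then 1 else 0)"
      using False by (simp add: k_eq test_vec_def sum_subtractf)
    also have "\<dots> = 0"
      using k k_eq part_pos[OF i] by (cases "i = i0") simp_all
    finally show ?thesis using False by (simp add: k_eq member_sum_def)
  qed
  finally show ?thesis .
qed

lemma sum_sheets: "(\<Sum>c\<in>sheets. f c) = (\<Sum>i<nparts. \<Sum>c\<in>{i} \<times> {..<part i}. f c)"
  unfolding sheets_def by (simp add: sum_Sigma_eq_nested sum.cartesian_product')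

lemma sum_test_vec_sheets:
  assumes k: "k \<in> sheets"
  shows "(\<Sum>c\<in>sheets. test_vec k c) = (if k = (0, 0) then of_nat (sum_mset A) else 0)"
proof -
  obtain i0 j0 where k_eq: "k = (i0, j0)" and i0: "i0 < nparts" using k by (cases k) auto
  have "(\<Sum>c\<in>sheets. test_vec k c) = (\<Sum>i<nparts. member_sum k i)"
    by (simp add: sum_sheets sum_test_vec_member[OF k])
  also have "\<dots> = (if k = (0, 0) then of_nat (sum_mset A) else 0)"
  proof (cases "k = (0, 0) \<or> j0 \<noteq> 0")
    case True
    then show ?thesis by (auto simp: k_eq member_sum_def sum_parts)
  next
    case False
    then have j0: "j0 = 0" and i0_pos: "i0 \<noteq> 0" by (auto simp: k_eq)
    then have "member_sum k i = (if i = i0 then of_nat (part i) * of_nat (part 0) else 0)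
        - (if i = 0 then of_nat (part i) * of_nat (part i0) else 0)" for i
      by (simp add: k_eq member_sum_def)
    then have "(\<Sum>i<nparts. member_sum k i) = of_nat (part i0) * of_nat (part 0) - of_nat (part 0) * of_nat (part i0)"
      using i0 nparts_pos by (simp add: sum_subtractf)
    then show ?thesis using i0_pos by (simp add: k_eq mult.commute)
  qed
  finally show ?thesis .
qed

lemma test_vec_const_on_block:
  assumes k: "k \<in> sheets" and u: "u \<in> test_supp k" and B: "B \<in> sheet_blocks u"
    and c: "c \<in> B" and c': "c' \<in> B"
  shows "test_vec k c = test_vec k c'"
proof -
  obtain c0 where B_eq: "B = glued u c0" using B by (auto simp: sheet_blocks_def)
  consider "k = (0, 0)" | "k \<noteq> (0, 0)" "snd k = 0" "u \<in> V0" "u \<notin> V1" | "u \<notin> V0"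
    using u by (auto simp: test_supp_def split: if_splits)
  then show ?thesis
  proof cases
    case 2
    then have "fst c = fst c'" using c c' B_eq by (auto simp: glued_def)
    then show ?thesis using 2 by (simp add: test_vec_def)
  next
    case 3
    moreover have "u \<notin> V1" using 3 V1_subset by blast
    ultimately have "c = c'" using c c' B_eq by (simp add: glued_def)
    then show ?thesis by simp
  qed (simp add: test_vec_def)
qed

lemma test_vec_sum_on_block:
  assumes k: "k \<in> sheets" and v: "v \<in> V" "v \<notin> test_supp k" and B: "B \<in> sheet_blocks v"
  shows "(\<Sum>c\<in>B. test_vec k c) = 0"
proof -
  obtain i0 j0 where c0: "(i0, j0) \<in> sheets" and B_eq: "B = glued v (i0, j0)"
    using B by (auto simp: sheet_blocks_def)
  have k0: "k \<noteq> (0, 0)" using v by (auto simp: test_supp_def)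
  consider "v \<in> V1" | "v \<in> V0" "v \<notin> V1" "snd k \<noteq> 0"
    using v k0 by (auto simp: test_supp_def split: if_splits)
  then show ?thesis
  proof cases
    case 1
    then have "B = sheets" using B_eq by (simp add: glued_def)
    then show ?thesis using k0 sum_test_vec_sheets[OF k] by simp
  next
    case 2
    then have "B = {i0} \<times> {..<part i0}" using B_eq by (simp add: glued_def)
    moreover have i: "i0 < nparts" using c0 by simp
    ultimately have "(\<Sum>c\<in>B. test_vec k c) = member_sum k i0"
      using sum_test_vec_member[OF k i] by simp
    also have "\<dots> = 0" using 2 k0 by (simp add: member_sum_def)
    finally show ?thesis .
  qed
qed

lemma test_vec_coeff_first_sheet:
  assumes indep: "\<And>c. c \<in> sheets \<Longrightarrow> (\<Sum>k\<in>sheets. \<mu> k * test_vec k c) = 0"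
    and i: "i < nparts"
  shows "\<mu> (i, 0) = 0"
proof -
  have sum_zero: "(\<Sum>k\<in>sheets. \<mu> k * (\<Sum>c\<in>S. test_vec k c)) = 0" if "S \<subseteq> sheets" for S
  proof -
    have "(\<Sum>k\<in>sheets. \<mu> k * (\<Sum>c\<in>S. test_vec k c)) = (\<Sum>c\<in>S. \<Sum>k\<in>sheets. \<mu> k * test_vec k c)"
      by (simp add: sum_distrib_left sum.swap[where A = sheets])
    also have "\<dots> = 0" using indep that by (intro sum.neutral) auto
    finally show ?thesis .
  qed
  have "(0, 0) \<in> sheets" using nparts_pos part_pos by simp
  have "part 0 \<le> sum_mset A"
    unfolding sum_parts using nparts_pos by (intro member_le_sum) auto
  then have sum_pos: "sum_mset A \<noteq> 0" using part_pos[OF nparts_pos] by linarith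
  have "0 = (\<Sum>k\<in>sheets. \<mu> k * (\<Sum>c\<in>sheets. test_vec k c))" using sum_zero by simp
  also have "\<dots> = (\<Sum>k\<in>sheets. if k = (0, 0) then \<mu> (0, 0) * of_nat (sum_mset A) else 0)"
    by (intro sum.cong refl) (simp add: sum_test_vec_sheets)
  also have "\<dots> = \<mu> (0, 0) * of_nat (sum_mset A)"
    by (simp only: sum.delta[OF finite_sheets] if_P[OF \<open>(0, 0) \<in> sheets\<close>])
  finally have \<mu>_00: "\<mu> (0, 0) = 0" using sum_pos by (metis mult_eq_0_iff of_nat_eq_0_iff)
  show ?thesis
  proof (cases "i = 0")
    case False
    have "(\<Sum>k\<in>sheets. \<mu> k * member_sum k i)
        = (\<Sum>k\<in>sheets. \<mu> k * (\<Sum>c\<in>{i} \<times> {..<part i}. test_vec k c))"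
      using sum_test_vec_member i by (intro sum.cong refl) simp
    also have "\<dots> = 0" using i by (intro sum_zero) auto
    finally have "0 = (\<Sum>k\<in>sheets. \<mu> k * member_sum k i)" by simp
    also have "\<dots> = (\<Sum>k\<in>sheets. if k = (i, 0) then \<mu> (i, 0) * (of_nat (part i) * of_nat (part 0)) else 0)"
      using False \<mu>_00 by (intro sum.cong refl) (auto simp: member_sum_def)
    also have "\<dots> = \<mu> (i, 0) * (of_nat (part i) * of_nat (part 0))"
      using i part_pos finite_sheets by simp
    finally show ?thesis using part_pos[OF i] part_pos[OF nparts_pos] by simp
  qed (use \<mu>_00 in simp)
qed

lemma test_vec_independent:
  assumes indep: "\<And>c. c \<in> sheets \<Longrightarrow> (\<Sum>k\<in>sheets. \<mu> k * test_vec k c) = 0"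
  shows "\<forall>k\<in>sheets. \<mu> k = 0"
proof
  fix k assume k: "k \<in> sheets"
  obtain i j where k_eq: "k = (i, j)" by (cases k)
  have first: "\<mu> (i', 0) = 0" if "i' < nparts" for i'
    using test_vec_coeff_first_sheet[OF indep that] by simp
  show "\<mu> k = 0"
  proof (cases "j = 0")
    case True
    then show ?thesis using first k k_eq by simp
  next
    case False
    have "0 = (\<Sum>k\<in>sheets. \<mu> k * test_vec k (i, j))" using indep k k_eq by simp
    also have "\<dots> = (\<Sum>k\<in>sheets. if k = (i, j) then \<mu> (i, j) else 0)"
    proof (intro sum.cong refl)
      fix k' assume "k' \<in> sheets"
      then show "\<mu> k' * test_vec k' (i, j) = (if k' = (i, j) then \<mu> (i, j) else 0)"
        using first False by (cases k') (auto simp: test_vec_def)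
    qed
    also have "\<dots> = \<mu> (i, j)" using k k_eq finite_sheets by simp
    finally show ?thesis using k_eq by simp
  qed
qed

lemma fst_sheets: "fst ` sheets = {..<nparts}"
proof (intro equalityI subsetI)
  fix i assume "i \<in> {..<nparts}"
  then have "(i, 0) \<in> sheets" using part_pos by simp
  then show "i \<in> fst ` sheets" by (rule rev_image_eqI) simp
qed (auto simp: sheets_def)

lemma card_sheet_blocks:
  assumes v: "v \<in> V"
  shows "card (sheet_blocks v) = card {k \<in> sheets. v \<in> test_supp k}"
proof -
  have "(0, 0) \<in> sheets" using nparts_pos part_pos by simp
  then have "sheets \<noteq> {}" by blast
  consider "v \<in> V1" | "v \<in> V0" "v \<notin> V1" | "v \<notin> V0" "v \<notin> V1" using V1_subset by blast
  then show ?thesis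
  proof cases
    case 1
    then have "sheet_blocks v = {sheets}" "{k \<in> sheets. v \<in> test_supp k} = {(0, 0)}"
      using \<open>(0, 0) \<in> sheets\<close> \<open>sheets \<noteq> {}\<close> v V1_subset
      by (auto simp: sheet_blocks_def glued_def test_supp_def image_constant_conv)
    then show ?thesis by simp
  next
    case 2
    have "sheet_blocks v = (\<lambda>i. {i} \<times> {..<part i}) ` fst ` sheets"
      unfolding sheet_blocks_def image_image using 2 by (intro image_cong refl) (simp add: glued_def)
    moreover have "inj_on (\<lambda>i. {i} \<times> {..<part i}) {..<nparts}"
    proof
      fix i i' assume i: "i \<in> {..<nparts}" and "{i} \<times> {..<part i} = {i'} \<times> {..<part i'}"
      moreover have "(i, 0) \<in> {i} \<times> {..<part i}" using part_pos i by simp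
      ultimately show "i = i'" by blast
    qed
    moreover have "{k \<in> sheets. v \<in> test_supp k} = (\<lambda>i. (i, 0)) ` {..<nparts}"
      using 2 v part_pos by (auto simp: test_supp_def)
    ultimately show ?thesis by (simp add: fst_sheets card_image inj_on_def)
  next
    case 3
    have "sheet_blocks v = (\<lambda>c. {c}) ` sheets"
      unfolding sheet_blocks_def using 3 by (intro image_cong refl) (simp add: glued_def)
    moreover have "{k \<in> sheets. v \<in> test_supp k} = sheets"
      using 3 v by (auto simp: test_supp_def)
    ultimately show ?thesis by (simp add: card_image)
  qed
qed

lemma sheet_partitions: "sheet_partitions V sheets sheet_blocks sheets test_supp test_vec"
proof (rule sheet_partitions.intro)
  show "test_supp k \<subseteq> V" for k by (auto simp: test_supp_def)
qed (rule finite_V finite_sheets partition_sheet_blocks test_vec_const_on_block test_vec_sum_on_block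
       test_vec_independent card_sheet_blocks, (assumption+)?)+

lemma prod_test_supp:
  "(\<Prod>k\<in>sheets. g (test_supp k)) = g V * g (V - V1) ^ (nparts - 1) * g (V - V0) ^ (sum_mset A - nparts)"
proof -
  have member: "(\<Prod>j<part i. g (test_supp (i, j))) = g (test_supp (i, 0)) * g (V - V0) ^ (part i - 1)"
    if i: "i < nparts" for i
  proof -
    obtain m where m: "part i = Suc m" using part_pos[OF i] not0_implies_Suc by blast
    show ?thesis unfolding m prod.lessThan_Suc_shift by (simp add: test_supp_def)
  qed
  obtain n where n: "nparts = Suc n" using nparts_pos not0_implies_Suc by blast
  have "(\<Prod>k\<in>sheets. g (test_supp k)) = (\<Prod>i<nparts. \<Prod>j<part i. g (test_supp (i, j)))"
    using prod.Sigma[of "{..<nparts}" "\<lambda>i. {..<part i}" "\<lambda>i j. g (test_supp (i, j))"]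
    by (simp add: sheets_def)
  also have "\<dots> = (\<Prod>i<nparts. g (test_supp (i, 0))) * (\<Prod>i<nparts. g (V - V0) ^ (part i - 1))"
    by (simp add: member prod.distrib)
  also have "(\<Prod>i<nparts. g (test_supp (i, 0))) = g V * g (V - V1) ^ (nparts - 1)"
    unfolding n prod.lessThan_Suc_shift by (simp add: test_supp_def)
  also have "(\<Prod>i<nparts. g (V - V0) ^ (part i - 1)) = g (V - V0) ^ (\<Sum>i<nparts. part i - 1)"
    by (simp add: power_sum)
  also have "(\<Sum>i<nparts. part i - 1) = (\<Sum>i<nparts. part i) - (\<Sum>i<nparts. 1)"
    using part_pos by (intro sum_subtractf_nat) (simp add: Suc_le_eq)
  also have "\<dots> = sum_mset A - nparts" by (simp add: sum_parts)
  finally show ?thesis by (simp add: mult.assoc)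
qed

theorem charpoly_contracted_union:
  "charpoly_on (mg_V H) (lap H) = charpoly_on V (lap G) * charpoly_on (V - V1) (lap G) ^ (nparts - 1)
     * charpoly_on (V - V0) (lap G) ^ (sum_mset A - nparts)"
proof -
  have "lap G = (\<lambda>v u. (if v = u then 1 else 0) - transition G v u)"
    by (simp add: fun_eq_iff lap_eq_transition)
  then show ?thesis
    using charpoly_H sheet_partitions.charpoly_lifted_op[OF sheet_partitions, of "transition G"]
      prod_test_supp by simp
qed

theorem spec_contracted_union:
  "spec H = spec G + repeat_mset (sum_mset A - size A) (dirichlet_spec G V0)
                   + repeat_mset (size A - 1) (dirichlet_spec G V1)"
proof -
  have nonzero: "charpoly_on W (lap G) \<noteq> 0" if "W \<subseteq> V" for W
    using that finite_V by (intro charpoly_on_nonzero) (rule finite_subset)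
  show ?thesis
    unfolding spec_def dirichlet_spec_def charpoly_contracted_union nparts_eq_size
    by (simp add: proots_mult proots_power nonzero add_ac)
qed

end

theorem theorem5p7:
  fixes G :: "('v, 'e) mgraph" and V0 V1 :: "'v set" and A :: "nat multiset" and r s :: nat
  assumes "magnetic_graph G"
    and "V1 \<subseteq> V0" and "V0 \<subseteq> mg_V G"
    and "0 \<notin># A" and "A \<noteq> {#}"
    and "sum_mset A = r" and "size A = s"
  shows "spec (contracted_A_union G V0 A V1) =
           spec G + repeat_mset (r - s) (dirichlet_spec G V0)
                  + repeat_mset (s - 1) (dirichlet_spec G V1)"
proof -
  have "contracted_union G V0 V1 A"
    using assms(1-5) by unfold_locales
  then show ?thesis
    using assms(6,7) by (simp add: contracted_union.spec_contracted_union)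
qed

end
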